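(* Let $0<q<1$ and let $\rho_-=(\pi_+-\pi_-)/2:\mathcal{A}(S^2_q)\to\mathcal{B}(\hat{\mathcal{H}})$. Then $\rho_-$ maps $\mathcal{A}(S^2_q)$ into rapid decay matrices on $\hat{\mathcal{H}}$. Consequently, writing $\pi=\rho_+\otimes\mathrm{id}_{\mathbb{C}^2}+\rho_-\otimes\gamma$ on $\mathcal{H}=\hat{\mathcal{H}}\otimes\mathbb{C}^2$ with $\rho_+=(\pi_++\pi_-)/2$, $\gamma=\begin{pmatrix}1&0\\0&-1\end{pmatrix}$, $F=\begin{pmatrix}0&1\\1&0\end{pmatrix}$, one has $[F,\pi(x)]=2\rho_-(x)\otimes F\gamma$, which is trace class for all $x\in\mathcal{A}(S^2_q)$, and the Fredholm module $(\mathcal{H},F)$ over $\mathcal{A}(S^2_q)$ is finite summable.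
   Context: $\mathcal{A}(S^2_q)$ is the unital $*$-algebra generated by $a,a^*$ and $b=b^*$ with $ba=q^2ab$, $a^*a+b^2=1$, $q^4aa^*+b^2=q^4$. $\hat{\mathcal{H}}$ has orthonormal basis $|l,m\rangle$, $l\in\mathbb{N}+\tfrac12$, $m=-l,\dots,l$ (out-of-range vectors are $0$). With $[x]=(q^x-q^{-x})/(q-q^{-1})$, the representations $\pi_\pm$ on $\hat{\mathcal{H}}$ are: $\pi_\pm(a)|l,m\rangle=q^{m-l-\frac12}\frac{\sqrt{[l+m+1][l+m+2]}}{[2l+2]}|l+1,m+1\rangle-q^{m+l+\frac12}\frac{\sqrt{[l-m-1][l-m]}}{[2l]}|l-1,m+1\rangle\pm\frac{(1+q^2)q^{m-\frac12}}{[2l][2l+2]}\sqrt{[l+m+1][l-m]}\,|l,m+1\rangle$, $\pi_\pm(b)|l,m\rangle=-q^{m+1}\frac{\sqrt{[l+m+1][l-m+1]}}{[2l+2]}|l+1,m\rangle-q^{m+1}\frac{\sqrt{[l+m][l-m]}}{[2l]}|l-1,m\rangle\pm\frac{[l-m+1][l+m]-q^2[l-m][l+m+1]}{[2l][2l+2]}|l,m\rangle$. An operator $T$ on $\hat{\mathcal{H}}$ is a rapid decay matrix if $\sup|\langle l,m|T|l',m'\rangle|(l+l'+1)^p<\infty$ for all $p\in\mathbb{N}$. A Fredholm module $(\mathcal{H},F)$ is finite summable if for some $k$, $[F,x_0]\cdots[F,x_k]$ is trace class for all $x_j$ in the algebra. *)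

theory Defs
  imports "HOL-Analysis.Analysis"
begin

text \<open>Operators are represented by their matrices with respect to a fixed orthonormal
basis: M i j is the matrix coefficient of basis vector i in M applied to basis vector j.\<close>

type_synonym 'i mat = "'i \<Rightarrow> 'i \<Rightarrow> complex"

definition mat_mult :: "'i mat \<Rightarrow> 'i mat \<Rightarrow> 'i mat" where
  "mat_mult M N = (\<lambda>i j. infsum (\<lambda>k. M i k * N k j) UNIV)"

definition mat_add :: "'i mat \<Rightarrow> 'i mat \<Rightarrow> 'i mat" where
  "mat_add M N = (\<lambda>i j. M i j + N i j)"

definition mat_sub :: "'i mat \<Rightarrow> 'i mat \<Rightarrow> 'i mat" where
  "mat_sub M N = (\<lambda>i j. M i j - N i j)"

definition mat_scale :: "complex \<Rightarrow> 'i mat \<Rightarrow> 'i mat" where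
  "mat_scale c M = (\<lambda>i j. c * M i j)"

definition mat_adj :: "'i mat \<Rightarrow> 'i mat" where
  "mat_adj M = (\<lambda>i j. cnj (M j i))"

definition mat_id :: "'i set \<Rightarrow> 'i mat" where
  "mat_id B = (\<lambda>i j. if i = j \<and> i \<in> B then 1 else 0)"

definition mat_tensor :: "'i mat \<Rightarrow> 'k mat \<Rightarrow> ('i \<times> 'k) mat" where
  "mat_tensor M G = (\<lambda>(i, s) (j, t). M i j * G s t)"

definition commutator :: "'i mat \<Rightarrow> 'i mat \<Rightarrow> 'i mat" where
  "commutator S T = mat_sub (mat_mult S T) (mat_mult T S)"

definition hilbert_schmidt :: "'i set \<Rightarrow> 'i mat \<Rightarrow> bool" where
  "hilbert_schmidt B A \<longleftrightarrow>
     (\<forall>i j. (i \<notin> B \<or> j \<notin> B) \<longrightarrow> A i j = 0) \<and>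
     (\<lambda>(i, j). (cmod (A i j))\<^sup>2) summable_on (B \<times> B)"

definition trace_class :: "'i set \<Rightarrow> 'i mat \<Rightarrow> bool" where
  "trace_class B T \<longleftrightarrow> (\<exists>A C. hilbert_schmidt B A \<and> hilbert_schmidt B C \<and> T = mat_mult A C)"

text \<open>Basis vectors |l,m> with l in N + 1/2 and m = -l, ..., l, encoded as pairs of reals.\<close>
definition HB :: "(real \<times> real) set" where
  "HB = {(l, m). l - 1/2 \<in> \<nat> \<and> l + m \<in> \<nat> \<and> m \<le> l}"

definition qnum :: "real \<Rightarrow> real \<Rightarrow> real" where
  "qnum q x = (q powr x - q powr (- x)) / (q - 1 / q)"

text \<open>Matrices of pi_s(a) and pi_s(b), with s = 1 for pi_+ and s = -1 for pi_-.\<close>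
definition amat :: "real \<Rightarrow> real \<Rightarrow> (real \<times> real) mat" where
  "amat q s = (\<lambda>i j. case j of (l, m) \<Rightarrow>
     if i \<in> HB \<and> j \<in> HB then
       (if i = (l + 1, m + 1) then
          complex_of_real (q powr (m - l - 1/2) * sqrt (qnum q (l+m+1) * qnum q (l+m+2)) / qnum q (2*l+2))
        else if i = (l - 1, m + 1) then
          complex_of_real (- (q powr (m + l + 1/2) * sqrt (qnum q (l-m-1) * qnum q (l-m)) / qnum q (2*l)))
        else if i = (l, m + 1) then
          complex_of_real (s * ((1 + q\<^sup>2) * q powr (m - 1/2) / (qnum q (2*l) * qnum q (2*l+2)))
                           * sqrt (qnum q (l+m+1) * qnum q (l-m)))
        else 0)
     else 0)"

definition bmat :: "real \<Rightarrow> real \<Rightarrow> (real \<times> real) mat" where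
  "bmat q s = (\<lambda>i j. case j of (l, m) \<Rightarrow>
     if i \<in> HB \<and> j \<in> HB then
       (if i = (l + 1, m) then
          complex_of_real (- (q powr (m + 1) * sqrt (qnum q (l+m+1) * qnum q (l-m+1)) / qnum q (2*l+2)))
        else if i = (l - 1, m) then
          complex_of_real (- (q powr (m + 1) * sqrt (qnum q (l+m) * qnum q (l-m)) / qnum q (2*l)))
        else if i = (l, m) then
          complex_of_real (s * (qnum q (l-m+1) * qnum q (l+m) - q\<^sup>2 * qnum q (l-m) * qnum q (l+m+1))
                           / (qnum q (2*l) * qnum q (2*l+2)))
        else 0)
     else 0)"

text \<open>Every element of the unital *-algebra A(S^2_q) is represented by a
noncommutative polynomial (with complex coefficients) in the generators a, a*, b
(b is self-adjoint, so this set is closed under *).\<close>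
datatype sq_expr = Ga | Gastar | Gb | Scal complex | Plus sq_expr sq_expr | Times sq_expr sq_expr

fun pi_rep :: "real \<Rightarrow> real \<Rightarrow> sq_expr \<Rightarrow> (real \<times> real) mat" where
  "pi_rep q s Ga = amat q s"
| "pi_rep q s Gastar = mat_adj (amat q s)"
| "pi_rep q s Gb = bmat q s"
| "pi_rep q s (Scal c) = mat_scale c (mat_id HB)"
| "pi_rep q s (Plus x y) = mat_add (pi_rep q s x) (pi_rep q s y)"
| "pi_rep q s (Times x y) = mat_mult (pi_rep q s x) (pi_rep q s y)"

definition rho_minus :: "real \<Rightarrow> sq_expr \<Rightarrow> (real \<times> real) mat" where
  "rho_minus q x = mat_scale (1/2) (mat_sub (pi_rep q 1 x) (pi_rep q (-1) x))"

definition rho_plus :: "real \<Rightarrow> sq_expr \<Rightarrow> (real \<times> real) mat" where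
  "rho_plus q x = mat_scale (1/2) (mat_add (pi_rep q 1 x) (pi_rep q (-1) x))"

definition rapid_decay :: "(real \<times> real) mat \<Rightarrow> bool" where
  "rapid_decay T \<longleftrightarrow> (\<forall>p::nat. bdd_above
     ((\<lambda>((l, m), (l', m')). cmod (T (l, m) (l', m')) * (l + l' + 1) ^ p) ` (HB \<times> HB)))"

text \<open>C^2 has basis indexed by bool: True = first, False = second basis vector.\<close>
definition id2 :: "bool mat" where "id2 = (\<lambda>s t. if s = t then 1 else 0)"
definition gamma2 :: "bool mat" where "gamma2 = (\<lambda>s t. if s = t then (if s then 1 else -1) else 0)"
definition F2 :: "bool mat" where "F2 = (\<lambda>s t. if s \<noteq> t then 1 else 0)"

definition HB2 :: "((real \<times> real) \<times> bool) set" where "HB2 = HB \<times> UNIV"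

definition pi_tot :: "real \<Rightarrow> sq_expr \<Rightarrow> ((real \<times> real) \<times> bool) mat" where
  "pi_tot q x = mat_add (mat_tensor (rho_plus q x) id2) (mat_tensor (rho_minus q x) gamma2)"

definition Fop :: "((real \<times> real) \<times> bool) mat" where
  "Fop = mat_tensor (mat_id HB) F2"

definition finite_summable :: "real \<Rightarrow> bool" where
  "finite_summable q \<longleftrightarrow> (\<exists>k::nat. \<forall>xs. length xs = Suc k \<longrightarrow>
     trace_class HB2 (foldr mat_mult (map (\<lambda>x. commutator Fop (pi_tot q x)) xs) (mat_id HB2)))"

end

theory Submission
  imports Defs
begin

(*
  In the basis |l,m>, the matrices of pi_+(a), pi_+(b), pi_-(a), pi_-(b) are banded (they shift
  l and m by at most one) with bounded entries, and pi_+ and pi_- differ only in the coefficient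
  that keeps l fixed, which is O(q^(2l)). Banded matrices with bounded entries form an algebra,
  and the bound |(pi_+(x) - pi_-(x)) i j| <= C q^(l_i + l_j) survives products by the Leibniz rule
    pi_+(xy) - pi_-(xy) = (pi_+(x) - pi_-(x)) pi_+(y) + pi_-(x) (pi_+(y) - pi_-(y)),
  since a band of width K costs only a factor q^(-K). Exponential decay in l + l' gives rapid
  decay; it also factors rho_-(x) tensor G, for any 2 x 2 matrix G, as diag(q^(l/2)) times a
  Hilbert-Schmidt matrix, so [F, pi(x)] = 2 rho_-(x) tensor F gamma is trace class and the
  module is finite summable already for k = 0.
*)

lemma HB_bounds: "(l, m) \<in> HB \<Longrightarrow> 1/2 \<le> l \<and> 0 \<le> l + m \<and> m \<le> l"
  unfolding HB_def by (auto elim!: Nats_cases)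

section \<open>Banded matrices on the lattice of labels (l, m)\<close>

definition nbhd :: "int \<Rightarrow> real \<times> real \<Rightarrow> (real \<times> real) set" where
  "nbhd K i = (\<lambda>(a, b). (fst i + of_int a, snd i + of_int b)) ` ({-K..K} \<times> {-K..K})"

definition banded :: "int \<Rightarrow> (real \<times> real) mat \<Rightarrow> bool" where
  "banded K M \<longleftrightarrow> (\<forall>i j. M i j \<noteq> 0 \<longrightarrow> j \<in> nbhd K i)"

definition bounded_entries :: "real \<Rightarrow> 'i mat \<Rightarrow> bool" where
  "bounded_entries B M \<longleftrightarrow> (\<forall>i j. cmod (M i j) \<le> B)"

definition supported :: "'i set \<Rightarrow> 'i mat \<Rightarrow> bool" where
  "supported S M \<longleftrightarrow> (\<forall>i j. M i j \<noteq> 0 \<longrightarrow> i \<in> S \<and> j \<in> S)"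

definition exp_decay :: "real \<Rightarrow> real \<Rightarrow> (real \<times> real) mat \<Rightarrow> bool" where
  "exp_decay q C M \<longleftrightarrow> (\<forall>i j. cmod (M i j) \<le> C * q powr (fst i + fst j))"

lemma finite_nbhd [simp]: "finite (nbhd K i)"
  unfolding nbhd_def by simp

lemma card_nbhd_le: "card (nbhd K i) \<le> card ({-K..K} \<times> {-K..K})"
  unfolding nbhd_def by (rule card_image_le) simp

lemma mem_nbhd_iff:
  "j \<in> nbhd K i \<longleftrightarrow> (\<exists>a b. \<bar>a\<bar> \<le> K \<and> \<bar>b\<bar> \<le> K \<and> j = (fst i + of_int a, snd i + of_int b))"
  unfolding nbhd_def by (auto simp: abs_le_iff)

lemma nbhd_sym: "j \<in> nbhd K i \<Longrightarrow> i \<in> nbhd K j"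
proof -
  assume "j \<in> nbhd K i"
  then obtain a b where "\<bar>a\<bar> \<le> K" "\<bar>b\<bar> \<le> K" "j = (fst i + of_int a, snd i + of_int b)"
    unfolding mem_nbhd_iff by blast
  then show "i \<in> nbhd K j"
    unfolding mem_nbhd_iff by (intro exI[of _ "- a"] exI[of _ "- b"]) auto
qed

lemma nbhd_trans: "j \<in> nbhd K i \<Longrightarrow> k \<in> nbhd K' j \<Longrightarrow> k \<in> nbhd (K + K') i"
proof -
  assume "j \<in> nbhd K i" "k \<in> nbhd K' j"
  then obtain a b a' b' where "\<bar>a\<bar> \<le> K" "\<bar>b\<bar> \<le> K" "j = (fst i + of_int a, snd i + of_int b)"
    "\<bar>a'\<bar> \<le> K'" "\<bar>b'\<bar> \<le> K'" "k = (fst j + of_int a', snd j + of_int b')"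
    unfolding mem_nbhd_iff by blast
  then show "k \<in> nbhd (K + K') i"
    unfolding mem_nbhd_iff by (intro exI[of _ "a + a'"] exI[of _ "b + b'"]) auto
qed

lemma nbhd_mono: "K \<le> K' \<Longrightarrow> j \<in> nbhd K i \<Longrightarrow> j \<in> nbhd K' i"
  unfolding mem_nbhd_iff by force

lemma nbhd_self: "0 \<le> K \<Longrightarrow> i \<in> nbhd K i"
  unfolding mem_nbhd_iff by (rule exI[of _ 0], rule exI[of _ 0]) simp

lemma fst_nbhd_ge: "j \<in> nbhd K i \<Longrightarrow> fst i - K \<le> fst j"
  unfolding mem_nbhd_iff by auto

lemma mem_nbhd_1I:
  assumes "a \<in> {-1, 0, 1}" "b \<in> {-1, 0, 1}"
  shows "(fst i + a, snd i + b) \<in> nbhd 1 i"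
proof -
  have unit: "\<exists>n::int. \<bar>n\<bar> \<le> 1 \<and> x = of_int n" if "x \<in> {-1, 0, 1}" for x :: real
    using that by (auto intro: exI[of _ "-1"] exI[of _ 0] exI[of _ 1])
  show ?thesis
    using unit[OF assms(1)] unit[OF assms(2)] unfolding mem_nbhd_iff by auto
qed

lemma mat_mult_banded_left:
  assumes "banded K M"
  shows "mat_mult M N i j = (\<Sum>k\<in>nbhd K i. M i k * N k j)"
proof -
  have "M i k = 0" if "k \<notin> nbhd K i" for k
    using assms that unfolding banded_def by blast
  then have "mat_mult M N i j = infsum (\<lambda>k. M i k * N k j) (nbhd K i)"
    unfolding mat_mult_def by (intro infsum_cong_neutral) auto
  then show ?thesis by simp
qed

lemma mat_mult_banded_right:
  assumes "banded K N"
  shows "mat_mult M N i j = (\<Sum>k\<in>nbhd K j. M i k * N k j)"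
proof -
  have "N k j = 0" if "k \<notin> nbhd K j" for k
    using assms that nbhd_sym unfolding banded_def by blast
  then have "mat_mult M N i j = infsum (\<lambda>k. M i k * N k j) (nbhd K j)"
    unfolding mat_mult_def by (intro infsum_cong_neutral) auto
  then show ?thesis by simp
qed

lemma banded_mono: "banded K M \<Longrightarrow> K \<le> K' \<Longrightarrow> banded K' M"
  unfolding banded_def using nbhd_mono by blast

lemma banded_add: "banded K M \<Longrightarrow> banded K N \<Longrightarrow> banded K (mat_add M N)"
  unfolding banded_def mat_add_def by (metis add.right_neutral add_0)

lemma banded_sub: "banded K M \<Longrightarrow> banded K N \<Longrightarrow> banded K (mat_sub M N)"
  unfolding banded_def mat_sub_def by (metis eq_iff_diff_eq_0)

lemma banded_adj: "banded K M \<Longrightarrow> banded K (mat_adj M)"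
  unfolding banded_def mat_adj_def by (simp add: nbhd_sym)

lemma banded_scale_id: "banded 0 (mat_scale c (mat_id S))"
  unfolding banded_def mat_scale_def mat_id_def by (simp add: nbhd_self)

lemma banded_mult:
  assumes "banded K M" "banded K' N"
  shows "banded (K + K') (mat_mult M N)"
  unfolding banded_def
proof (intro allI impI)
  fix i j assume "mat_mult M N i j \<noteq> 0"
  then obtain k where "M i k * N k j \<noteq> 0"
    unfolding mat_mult_banded_left[OF assms(1)] by (meson sum.neutral)
  then show "j \<in> nbhd (K + K') i"
    using assms nbhd_trans unfolding banded_def by (metis mult_zero_left mult_zero_right)
qed

lemma supported_add: "supported S M \<Longrightarrow> supported S N \<Longrightarrow> supported S (mat_add M N)"
  unfolding supported_def mat_add_def by (metis add.right_neutral add_0)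

lemma supported_sub: "supported S M \<Longrightarrow> supported S N \<Longrightarrow> supported S (mat_sub M N)"
  unfolding supported_def mat_sub_def by (metis eq_iff_diff_eq_0)

lemma supported_scale: "supported S M \<Longrightarrow> supported S (mat_scale c M)"
  unfolding supported_def mat_scale_def by auto

lemma supported_adj: "supported S M \<Longrightarrow> supported S (mat_adj M)"
  unfolding supported_def mat_adj_def by (metis complex_cnj_zero)

lemma supported_scale_id: "supported S (mat_scale c (mat_id S))"
  unfolding supported_def mat_scale_def mat_id_def by simp

lemma supported_mult:
  assumes "supported S M" "supported S N"
  shows "supported S (mat_mult M N)"
  unfolding supported_def
proof (intro allI impI)
  fix i j assume "mat_mult M N i j \<noteq> 0"
  then obtain k where "M i k * N k j \<noteq> 0"
    unfolding mat_mult_def by (meson infsum_0)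
  then show "i \<in> S \<and> j \<in> S"
    using assms unfolding supported_def by auto
qed

lemma bounded_entries_nonneg: "bounded_entries B M \<Longrightarrow> 0 \<le> B"
  unfolding bounded_entries_def by (meson norm_ge_zero order_trans)

lemma bounded_entries_add:
  "bounded_entries B M \<Longrightarrow> bounded_entries B' N \<Longrightarrow> bounded_entries (B + B') (mat_add M N)"
  unfolding bounded_entries_def mat_add_def by (meson add_mono norm_triangle_ineq order_trans)

lemma bounded_entries_adj: "bounded_entries B M \<Longrightarrow> bounded_entries B (mat_adj M)"
  unfolding bounded_entries_def mat_adj_def by simp

lemma bounded_entries_scale_id: "bounded_entries (cmod c) (mat_scale c (mat_id S))"
  unfolding bounded_entries_def mat_scale_def mat_id_def by simp

lemma bounded_entries_mult:
  assumes "banded K M" "bounded_entries B M" "bounded_entries B' N"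
  shows "bounded_entries (real (card ({-K..K} \<times> {-K..K})) * B * B') (mat_mult M N)"
  unfolding bounded_entries_def
proof (intro allI)
  fix i j
  have B: "0 \<le> B" "0 \<le> B'" using assms(2,3) by (simp_all add: bounded_entries_nonneg)
  have M_le: "cmod (M i' j') \<le> B" and N_le: "cmod (N i' j') \<le> B'" for i' j'
    using assms(2,3) unfolding bounded_entries_def by blast+
  have "cmod (mat_mult M N i j) \<le> (\<Sum>k\<in>nbhd K i. cmod (M i k * N k j))"
    unfolding mat_mult_banded_left[OF assms(1)] by (rule norm_sum)
  also have "\<dots> \<le> real (card (nbhd K i)) * (B * B')"
    unfolding norm_mult using M_le N_le B by (intro sum_bounded_above mult_mono) auto
  also have "\<dots> \<le> real (card ({-K..K} \<times> {-K..K})) * (B * B')"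
    by (rule mult_right_mono[OF of_nat_mono[OF card_nbhd_le]]) (use B in simp)
  finally show "cmod (mat_mult M N i j) \<le> real (card ({-K..K} \<times> {-K..K})) * B * B'"
    by (simp add: mult.assoc)
qed

lemma exp_decay_add:
  "exp_decay q C M \<Longrightarrow> exp_decay q C' N \<Longrightarrow> exp_decay q (C + C') (mat_add M N)"
  unfolding exp_decay_def mat_add_def distrib_right
  by (metis (no_types) add_mono norm_triangle_ineq order_trans)

lemma exp_decay_scale: "exp_decay q C M \<Longrightarrow> exp_decay q (cmod c * C) (mat_scale c M)"
  unfolding exp_decay_def mat_scale_def norm_mult mult.assoc
  by (simp add: mult_left_mono)

lemma exp_decay_adj: "exp_decay q C M \<Longrightarrow> exp_decay q C (mat_adj M)"
  unfolding exp_decay_def mat_adj_def complex_mod_cnj by (metis add.commute)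

lemma exp_decay_sub_self: "exp_decay q 0 (mat_sub M M)"
  unfolding exp_decay_def mat_sub_def by simp

(* The band condition makes the sums in mat_mult finite; infsum is not linear in general. *)
lemma mat_sub_mat_mult:
  assumes "banded K M" "banded K M'"
  shows "mat_sub (mat_mult M N) (mat_mult M' N')
       = mat_add (mat_mult (mat_sub M M') N) (mat_mult M' (mat_sub N N'))"
proof (intro ext)
  fix i j
  note sums = mat_mult_banded_left[OF assms(1)] mat_mult_banded_left[OF assms(2)]
    mat_mult_banded_left[OF banded_sub[OF assms]]
  have "mat_sub (mat_mult M N) (mat_mult M' N') i j
      = (\<Sum>k\<in>nbhd K i. M i k * N k j - M' i k * N' k j)"
    by (simp only: mat_sub_def sums sum_subtractf)
  also have "\<dots> = (\<Sum>k\<in>nbhd K i. mat_sub M M' i k * N k j + M' i k * mat_sub N N' k j)"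
    by (rule sum.cong) (auto simp: mat_sub_def algebra_simps)
  also have "\<dots> = mat_add (mat_mult (mat_sub M M') N) (mat_mult M' (mat_sub N N')) i j"
    by (simp only: mat_add_def sums sum.distrib)
  finally show "mat_sub (mat_mult M N) (mat_mult M' N') i j
      = mat_add (mat_mult (mat_sub M M') N) (mat_mult M' (mat_sub N N')) i j" .
qed

lemma amat_banded: "banded 1 (amat q s)"
  unfolding banded_def
proof (intro allI impI)
  fix i j assume nz: "amat q s i j \<noteq> 0"
  obtain l m where j: "j = (l, m)" by fastforce
  have "i = (l+1, m+1) \<or> i = (l-1, m+1) \<or> i = (l, m+1)"
    using nz unfolding amat_def j by (auto split: if_splits)
  then show "j \<in> nbhd 1 i"
    using mem_nbhd_1I[of "-1" "-1" i] mem_nbhd_1I[of 1 "-1" i] mem_nbhd_1I[of 0 "-1" i]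
    unfolding j by auto
qed

lemma bmat_banded: "banded 1 (bmat q s)"
  unfolding banded_def
proof (intro allI impI)
  fix i j assume nz: "bmat q s i j \<noteq> 0"
  obtain l m where j: "j = (l, m)" by fastforce
  have "i = (l+1, m) \<or> i = (l-1, m) \<or> i = (l, m)"
    using nz unfolding bmat_def j by (auto split: if_splits)
  then show "j \<in> nbhd 1 i"
    using mem_nbhd_1I[of "-1" 0 i] mem_nbhd_1I[of 1 0 i] mem_nbhd_1I[of 0 0 i]
    unfolding j by auto
qed

lemma amat_supported: "supported HB (amat q s)"
  unfolding supported_def amat_def by (auto split: prod.splits)

lemma bmat_supported: "supported HB (bmat q s)"
  unfolding supported_def bmat_def by (auto split: prod.splits)

lemma pi_rep_supported: "supported HB (pi_rep q s x)"
  by (induction x) (auto intro: amat_supported bmat_supported supported_adj supported_scale_id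
      supported_add supported_mult)

lemma pi_rep_banded: "\<exists>K. banded K (pi_rep q s x)"
proof (induction x)
  case (Plus x y)
  then obtain K K' where "banded K (pi_rep q s x)" "banded K' (pi_rep q s y)" by blast
  then have "banded (max K K') (pi_rep q s (Plus x y))"
    by (metis banded_add banded_mono max.cobounded1 max.cobounded2 pi_rep.simps(5))
  then show ?case by blast
qed (auto intro: amat_banded bmat_banded banded_adj banded_scale_id banded_mult)

section \<open>The commutator with F and trace class\<close>

lemma infsum_UNIV_single:
  assumes "\<And>k. k \<noteq> a \<Longrightarrow> f k = 0"
  shows "infsum f UNIV = f a"
proof -
  have "infsum f UNIV = infsum f {a}"
    using assms by (intro infsum_cong_neutral) auto
  then show ?thesis by simp
qed

lemma mat_mult_Fop_left: "mat_mult Fop P (i, s) (j, t) = (if i \<in> HB then P (i, \<not> s) (j, t) else 0)"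
proof -
  have "mat_mult Fop P (i, s) (j, t) = Fop (i, s) (i, \<not> s) * P (i, \<not> s) (j, t)"
    unfolding mat_mult_def
    by (rule infsum_UNIV_single) (auto simp: Fop_def mat_tensor_def mat_id_def F2_def split: if_splits)
  then show ?thesis by (simp add: Fop_def mat_tensor_def mat_id_def F2_def)
qed

lemma mat_mult_Fop_right: "mat_mult P Fop (i, s) (j, t) = (if j \<in> HB then P (i, s) (j, \<not> t) else 0)"
proof -
  have "mat_mult P Fop (i, s) (j, t) = P (i, s) (j, \<not> t) * Fop (j, \<not> t) (j, t)"
    unfolding mat_mult_def
    by (rule infsum_UNIV_single) (auto simp: Fop_def mat_tensor_def mat_id_def F2_def split: if_splits)
  then show ?thesis by (simp add: Fop_def mat_tensor_def mat_id_def F2_def)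
qed

lemma mat_mult_F2_gamma2: "mat_mult F2 gamma2 s t = gamma2 (\<not> s) t"
proof -
  have "mat_mult F2 gamma2 s t = F2 s (\<not> s) * gamma2 (\<not> s) t"
    unfolding mat_mult_def by (rule infsum_UNIV_single) (auto simp: F2_def)
  then show ?thesis by (simp add: F2_def)
qed

lemma commutator_Fop_graded:
  assumes "supported HB R" "supported HB M"
  shows "commutator Fop (mat_add (mat_tensor R id2) (mat_tensor M gamma2))
       = mat_scale 2 (mat_tensor M (mat_mult F2 gamma2))"
proof (intro ext)
  fix x y :: "(real \<times> real) \<times> bool"
  obtain i s j t where xy: "x = (i, s)" "y = (j, t)" by fastforce
  show "commutator Fop (mat_add (mat_tensor R id2) (mat_tensor M gamma2)) x y
      = mat_scale 2 (mat_tensor M (mat_mult F2 gamma2)) x y"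
  proof (cases "i \<in> HB \<and> j \<in> HB")
    case True
    then show ?thesis
      unfolding xy commutator_def mat_sub_def mat_mult_Fop_left mat_mult_Fop_right
        mat_tensor_def mat_mult_F2_gamma2
      by (cases s; cases t) (simp_all add: mat_add_def mat_tensor_def mat_scale_def id2_def gamma2_def)
  next
    case False
    then have "R i j = 0" "M i j = 0" using assms unfolding supported_def by blast+
    then show ?thesis
      unfolding xy commutator_def mat_sub_def mat_mult_Fop_left mat_mult_Fop_right
      by (simp add: mat_add_def mat_tensor_def mat_scale_def)
  qed
qed

lemma mat_scale_mat_tensor: "mat_scale c (mat_tensor M G) = mat_tensor (mat_scale c M) G"
  by (simp add: mat_scale_def mat_tensor_def fun_eq_iff)

lemma supported_tensor: "supported S M \<Longrightarrow> supported (S \<times> UNIV) (mat_tensor M G)"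
  unfolding supported_def mat_tensor_def by auto

lemma mat_mult_id_right:
  assumes M: "supported S M"
  shows "mat_mult M (mat_id S) = M"
proof (intro ext)
  fix i j
  have "mat_mult M (mat_id S) i j = M i j * mat_id S j j"
    unfolding mat_mult_def by (rule infsum_UNIV_single) (simp add: mat_id_def)
  also have "\<dots> = M i j"
    using M unfolding supported_def mat_id_def by auto
  finally show "mat_mult M (mat_id S) i j = M i j" .
qed

lemma summable_on_product_nonneg:
  fixes f g :: "_ \<Rightarrow> real"
  assumes "f summable_on A" "g summable_on B" "\<And>x. x \<in> A \<Longrightarrow> 0 \<le> f x" "\<And>y. y \<in> B \<Longrightarrow> 0 \<le> g y"
  shows "(\<lambda>(x, y). f x * g y) summable_on A \<times> B"
proof (rule summable_on_SigmaI[where g = "\<lambda>x. f x * infsum g B"])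
  show "((\<lambda>y. case (x, y) of (x, y) \<Rightarrow> f x * g y) has_sum f x * infsum g B) B" for x
    using has_sum_cmult_right[OF has_sum_infsum[OF assms(2)]] by simp
  show "(\<lambda>x. f x * infsum g B) summable_on A"
    using assms(1) by (rule summable_on_cmult_left)
qed (use assms(3,4) in auto)

lemma hilbert_schmidt_diag:
  assumes "r summable_on B" "\<And>x. x \<in> B \<Longrightarrow> 0 \<le> r x"
  shows "hilbert_schmidt B (\<lambda>x y. if x = y \<and> x \<in> B then complex_of_real (sqrt (r x)) else 0)"
    (is "hilbert_schmidt B ?A")
  unfolding hilbert_schmidt_def
proof (intro conjI allI impI)
  show "?A x y = 0" if "x \<notin> B \<or> y \<notin> B" for x y
    using that by auto
  have "(\<lambda>(x, y). r x) summable_on (\<lambda>x. (x, x)) ` B"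
    using assms(1) by (subst summable_on_reindex) (auto simp: inj_on_def o_def)
  moreover have "(\<lambda>(x, y). r x) z = (case z of (x, y) \<Rightarrow> (cmod (?A x y))\<^sup>2)"
    if "z \<in> (\<lambda>x. (x, x)) ` B" for z
    using that assms(2) by auto
  ultimately show "(\<lambda>(x, y). (cmod (?A x y))\<^sup>2) summable_on B \<times> B"
    by (subst summable_on_cong_neutral[symmetric]) auto
qed

lemma hilbert_schmidt_if_entries_le:
  assumes "supported B D" "r summable_on B" "\<And>x. x \<in> B \<Longrightarrow> 0 \<le> r x"
    and "\<And>x y. x \<in> B \<Longrightarrow> y \<in> B \<Longrightarrow> (cmod (D x y))\<^sup>2 \<le> C * (r x * r y)"
  shows "hilbert_schmidt B D"
  unfolding hilbert_schmidt_def
proof (intro conjI allI impI)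
  show "D x y = 0" if "x \<notin> B \<or> y \<notin> B" for x y
    using that assms(1) unfolding supported_def by blast
  have "(\<lambda>(x, y). r x * r y) summable_on B \<times> B"
    using summable_on_product_nonneg[OF assms(2,2)] assms(3) by blast
  then have "(\<lambda>z. C * (case z of (x, y) \<Rightarrow> r x * r y)) summable_on B \<times> B"
    by (rule summable_on_cmult_right)
  then show "(\<lambda>(x, y). (cmod (D x y))\<^sup>2) summable_on B \<times> B"
    by (rule summable_on_comparison_test) (use assms(4) in auto)
qed

lemma trace_class_if_entries_le:
  fixes T :: "'i mat" and r :: "'i \<Rightarrow> real"
  assumes r_summable: "r summable_on B" and r_pos: "\<And>x. x \<in> B \<Longrightarrow> 0 < r x"
    and T_supported: "supported B T"
    and T_le: "\<And>x y. x \<in> B \<Longrightarrow> y \<in> B \<Longrightarrow> (cmod (T x y))\<^sup>2 \<le> C * (r x)\<^sup>2 * r y"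
  shows "trace_class B T"
proof -
  define A where "A x y = (if x = y \<and> x \<in> B then complex_of_real (sqrt (r x)) else 0)" for x y
  define D where "D x y = T x y / complex_of_real (sqrt (r x))" for x y
  have "hilbert_schmidt B A"
    unfolding A_def using r_summable r_pos[THEN less_imp_le] by (rule hilbert_schmidt_diag)
  moreover have "hilbert_schmidt B D"
  proof (rule hilbert_schmidt_if_entries_le[OF _ r_summable r_pos[THEN less_imp_le]])
    show "supported B D"
      using T_supported unfolding supported_def D_def by auto
    fix x y assume xy: "x \<in> B" "y \<in> B"
    have "(cmod (D x y))\<^sup>2 = (cmod (T x y))\<^sup>2 / r x"
      using r_pos[OF xy(1)] by (simp add: D_def norm_divide power_divide)
    also have "\<dots> \<le> C * (r x)\<^sup>2 * r y / r x"
      using T_le[OF xy] r_pos[OF xy(1)] by (simp add: divide_right_mono)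
    also have "\<dots> = C * (r x * r y)"
      using r_pos[OF xy(1)] by (simp add: power2_eq_square)
    finally show "(cmod (D x y))\<^sup>2 \<le> C * (r x * r y)" .
  qed
  moreover have "T = mat_mult A D"
  proof (intro ext)
    fix x y
    have "mat_mult A D x y = A x x * D x y"
      unfolding mat_mult_def by (rule infsum_UNIV_single) (simp add: A_def)
    also have "\<dots> = T x y"
    proof (cases "x \<in> B")
      case True
      then show ?thesis using r_pos[OF True] by (simp add: A_def D_def)
    next
      case False
      moreover have "T x y = 0" using False T_supported unfolding supported_def by blast
      ultimately show ?thesis by (simp add: A_def)
    qed
    finally show "T x y = mat_mult A D x y" by simp
  qed
  ultimately show ?thesis unfolding trace_class_def by blast
qed

section \<open>Estimates for 0 < q < 1\<close>

definition qgap :: "real \<Rightarrow> real" where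
  "qgap q = 1 / q - q"

context
  fixes q :: real
  assumes q_pos: "0 < q" and q_less_1: "q < 1"
begin

lemma qgap_pos: "qgap q > 0"
proof -
  have "q * q < 1" using mult_strict_mono[of q 1 q 1] q_pos q_less_1 by simp
  then show ?thesis unfolding qgap_def using q_pos by (simp add: field_simps)
qed

lemma powr_antimono: "a \<le> b \<Longrightarrow> q powr b \<le> q powr a"
  using powr_mono' q_pos q_less_1 by simp

lemma qnum_eq: "qnum q x = (q powr (- x) - q powr x) / qgap q"
  unfolding qnum_def qgap_def by (metis minus_diff_eq minus_divide_divide)

lemma abs_qnum_le:
  assumes "\<bar>x\<bar> \<le> y"
  shows "\<bar>qnum q x\<bar> \<le> q powr (- y) / qgap q"
proof -
  have "\<bar>q powr (- x) - q powr x\<bar> \<le> q powr (- \<bar>x\<bar>)"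
    using powr_antimono[of "- \<bar>x\<bar>" "\<bar>x\<bar>"] powr_antimono[of "- \<bar>x\<bar>" "- x"]
      powr_antimono[of "- \<bar>x\<bar>" x] by (cases "x \<ge> 0") auto
  also have "\<dots> \<le> q powr (- y)" using assms by (intro powr_antimono) simp
  finally show ?thesis
    unfolding qnum_eq abs_divide using qgap_pos by (simp add: divide_right_mono)
qed

lemma qnum_ge:
  assumes "1 \<le> x"
  shows "q powr (1 - x) \<le> qnum q x"
proof -
  have "q powr (1 - x) * qgap q = q powr (- x) - q powr (2 - x)"
    using q_pos by (simp add: qgap_def powr_diff powr_minus_divide field_simps power2_eq_square)
  also have "\<dots> \<le> q powr (- x) - q powr x"
    using assms by (simp add: powr_antimono)
  finally show ?thesis
    unfolding qnum_eq using qgap_pos by (simp add: field_simps)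
qed

lemma qnum_mult_ge:
  assumes "1 \<le> x" "1 \<le> y"
  shows "q powr (2 - x - y) \<le> qnum q x * qnum q y"
proof -
  have "q powr (2 - x - y) = q powr ((1 - x) + (1 - y))"
    by (rule arg_cong[where f = "(powr) q"]) simp
  also have "\<dots> = q powr (1 - x) * q powr (1 - y)"
    by (rule powr_add)
  also have "\<dots> \<le> qnum q x * qnum q y"
  proof (rule mult_mono)
    show "0 \<le> qnum q x" using qnum_ge[OF assms(1)] powr_ge_zero[of q "1 - x"] by linarith
  qed (use qnum_ge assms in auto)
  finally show ?thesis .
qed

lemma abs_qnum_mult_le:
  assumes "\<bar>x\<bar> \<le> a" "\<bar>y\<bar> \<le> b"
  shows "\<bar>qnum q x * qnum q y\<bar> \<le> q powr (- (a + b)) / (qgap q)\<^sup>2"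
proof -
  have "\<bar>qnum q x * qnum q y\<bar> \<le> (q powr (- a) / qgap q) * (q powr (- b) / qgap q)"
    unfolding abs_mult using abs_qnum_le[OF assms(1)] abs_qnum_le[OF assms(2)]
    by (intro mult_mono) auto
  also have "\<dots> = q powr (- a + - b) / (qgap q)\<^sup>2"
    unfolding powr_add by (simp add: power2_eq_square)
  finally show ?thesis by simp
qed

lemma abs_sqrt_qnum_mult_le:
  assumes "\<bar>x\<bar> \<le> a" "\<bar>y\<bar> \<le> b"
  shows "\<bar>sqrt (qnum q x * qnum q y)\<bar> \<le> q powr (- (a + b) / 2) / qgap q"
proof -
  have "q powr (- (a + b)) = q powr (- (a + b) / 2) * q powr (- (a + b) / 2)"
    unfolding powr_add[symmetric] by (rule arg_cong[where f = "(powr) q"]) simp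
  then have "\<bar>qnum q x * qnum q y\<bar> \<le> (q powr (- (a + b) / 2) / qgap q)\<^sup>2"
    using abs_qnum_mult_le[OF assms] by (simp add: power2_eq_square)
  then have "sqrt \<bar>qnum q x * qnum q y\<bar> \<le> sqrt ((q powr (- (a + b) / 2) / qgap q)\<^sup>2)"
    by (rule real_sqrt_le_mono)
  also have "\<dots> = q powr (- (a + b) / 2) / qgap q"
    using qgap_pos by simp
  finally show ?thesis by (simp add: real_sqrt_abs')
qed

lemma abs_powr_mult_div_le:
  assumes "\<bar>S\<bar> \<le> q powr b / c" "q powr d \<le> D" "0 < c"
  shows "\<bar>q powr a * S / D\<bar> \<le> q powr (a + b - d) / c"
proof -
  have "0 < q powr d" using q_pos by simp
  then have D_pos: "0 < D" using assms(2) by linarith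
  have "\<bar>q powr a * S / D\<bar> = q powr a * \<bar>S\<bar> / D" using D_pos by (simp add: abs_mult)
  also have "\<dots> \<le> q powr a * (q powr b / c) / q powr d"
    using assms D_pos q_pos by (intro frac_le mult_left_mono) auto
  also have "\<dots> = q powr (a + b - d) / c" by (simp add: powr_add powr_diff)
  finally show ?thesis .
qed

lemma abs_sqrt_qnum_term_le:
  assumes "\<bar>x\<bar> \<le> a" "\<bar>y\<bar> \<le> b" "1 \<le> z" "- 1 \<le> e - (a + b) / 2 + z - 1"
  shows "\<bar>q powr e * sqrt (qnum q x * qnum q y) / qnum q z\<bar> \<le> q powr (- 1) / qgap q"
proof -
  have "\<bar>q powr e * sqrt (qnum q x * qnum q y) / qnum q z\<bar>
      \<le> q powr (e + - (a + b) / 2 - (1 - z)) / qgap q"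
    using abs_sqrt_qnum_mult_le[OF assms(1,2)] qnum_ge[OF assms(3)] qgap_pos
    by (rule abs_powr_mult_div_le)
  also have "\<dots> \<le> q powr (- 1) / qgap q"
    using assms(4) qgap_pos by (intro divide_right_mono powr_antimono) (auto simp: field_simps)
  finally show ?thesis .
qed

lemma abs_amat_diag_le:
  assumes "(l, m) \<in> HB" "\<bar>s\<bar> \<le> 1"
  shows "\<bar>s * ((1 + q\<^sup>2) * q powr (m - 1/2) / (qnum q (2*l) * qnum q (2*l+2)))
           * sqrt (qnum q (l+m+1) * qnum q (l-m))\<bar> \<le> 2 * q powr (2*l - 1) / qgap q"
proof -
  note lm = HB_bounds[OF assms(1)]
  have "\<bar>q powr (m - 1/2) * sqrt (qnum q (l+m+1) * qnum q (l-m)) / (qnum q (2*l) * qnum q (2*l+2))\<bar>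
      \<le> q powr ((m - 1/2) + - ((l+m+1) + (l-m)) / 2 - (2 - 2*l - (2*l+2))) / qgap q"
    using abs_sqrt_qnum_mult_le[of "l+m+1" "l+m+1" "l-m" "l-m"] qnum_mult_ge[of "2*l" "2*l+2"]
      lm qgap_pos by (intro abs_powr_mult_div_le) auto
  also have "\<dots> \<le> q powr (2*l - 1) / qgap q"
    using lm qgap_pos by (intro divide_right_mono powr_antimono) (auto simp: field_simps)
  finally have bound: "\<bar>q powr (m - 1/2) * sqrt (qnum q (l+m+1) * qnum q (l-m))
      / (qnum q (2*l) * qnum q (2*l+2))\<bar> \<le> q powr (2*l - 1) / qgap q" .
  have "1 + q\<^sup>2 \<le> 2" using q_pos q_less_1 by (simp add: power2_eq_square mult_le_one)
  then have "\<bar>s\<bar> * (1 + q\<^sup>2) \<le> 1 * 2" using assms(2) by (intro mult_mono) auto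
  then have factor: "\<bar>s\<bar> * (1 + q\<^sup>2) \<le> 2" by simp
  show ?thesis
    using mult_mono[OF factor bound] qgap_pos by (simp add: abs_mult mult_ac)
qed

lemma abs_bmat_diag_le:
  assumes "(l, m) \<in> HB" "\<bar>s\<bar> \<le> 1"
  shows "\<bar>s * (qnum q (l-m+1) * qnum q (l+m) - q\<^sup>2 * qnum q (l-m) * qnum q (l+m+1))
           / (qnum q (2*l) * qnum q (2*l+2))\<bar> \<le> 2 * q powr (2*l - 1) / (qgap q)\<^sup>2"
proof -
  note lm = HB_bounds[OF assms(1)]
  have prod_le: "\<bar>qnum q x * qnum q y\<bar> \<le> q powr (- (2*l+1)) / (qgap q)\<^sup>2"
    if "\<bar>x\<bar> \<le> a" "\<bar>y\<bar> \<le> b" "a + b = 2*l+1" for x y a b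
    using abs_qnum_mult_le[OF that(1,2)] that(3) by simp
  have "\<bar>qnum q (l-m+1) * qnum q (l+m)\<bar> \<le> q powr (- (2*l+1)) / (qgap q)\<^sup>2"
    using lm by (intro prod_le[of _ "l-m+1" _ "l+m"]) auto
  moreover have "\<bar>q\<^sup>2 * qnum q (l-m) * qnum q (l+m+1)\<bar> \<le> q powr (- (2*l+1)) / (qgap q)\<^sup>2"
  proof -
    have "\<bar>qnum q (l-m) * qnum q (l+m+1)\<bar> \<le> q powr (- (2*l+1)) / (qgap q)\<^sup>2"
      using lm by (intro prod_le[of _ "l-m" _ "l+m+1"]) auto
    moreover have "q\<^sup>2 \<le> 1" using q_pos q_less_1 by (simp add: power2_eq_square mult_le_one)
    ultimately show ?thesis
      unfolding abs_mult abs_power2 mult.assoc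
      by (meson abs_ge_zero mult_left_le_one_le mult_nonneg_nonneg order_trans zero_le_power2)
  qed
  ultimately have num: "\<bar>qnum q (l-m+1) * qnum q (l+m) - q\<^sup>2 * qnum q (l-m) * qnum q (l+m+1)\<bar>
      \<le> 2 * q powr (- (2*l+1)) / (qgap q)\<^sup>2"
    by linarith
  define D where "D = qnum q (2*l) * qnum q (2*l+2)"
  have den: "q powr (- 4*l) \<le> D"
    using qnum_mult_ge[of "2*l" "2*l+2"] lm unfolding D_def by simp
  have d_pos: "0 < q powr (- 4*l)" using q_pos by simp
  have D_pos: "0 < D" using d_pos den by linarith
  have "\<bar>s * (qnum q (l-m+1) * qnum q (l+m) - q\<^sup>2 * qnum q (l-m) * qnum q (l+m+1)) / D\<bar>
      \<le> \<bar>qnum q (l-m+1) * qnum q (l+m) - q\<^sup>2 * qnum q (l-m) * qnum q (l+m+1)\<bar> / D"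
    unfolding abs_divide abs_mult abs_of_pos[OF D_pos] using assms(2) D_pos
    by (intro divide_right_mono mult_left_le_one_le) auto
  also have "\<dots> \<le> (2 * q powr (- (2*l+1)) / (qgap q)\<^sup>2) / q powr (- 4*l)"
    using num den d_pos by (intro frac_le) auto
  also have "\<dots> = 2 * (q powr (- (2*l+1)) / q powr (- 4*l)) / (qgap q)\<^sup>2"
    by simp
  also have "q powr (- (2*l+1)) / q powr (- 4*l) = q powr (2*l - 1)"
    by (simp add: powr_diff[symmetric])
  finally show ?thesis unfolding D_def .
qed

lemma abs_amat_offdiag_le:
  assumes "(l, m) \<in> HB"
  shows "\<bar>q powr (m - l - 1/2) * sqrt (qnum q (l+m+1) * qnum q (l+m+2)) / qnum q (2*l+2)\<bar>
           \<le> q powr (- 1) / qgap q"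
    and "\<bar>q powr (m + l + 1/2) * sqrt (qnum q (l-m-1) * qnum q (l-m)) / qnum q (2*l)\<bar>
           \<le> q powr (- 1) / qgap q"
  using HB_bounds[OF assms]
  by (intro abs_sqrt_qnum_term_le[of _ "l+m+1" _ "l+m+2"] abs_sqrt_qnum_term_le[of _ "l-m+1" _ "l-m"];
      auto simp: field_simps)+

lemma abs_bmat_offdiag_le:
  assumes "(l, m) \<in> HB"
  shows "\<bar>q powr (m + 1) * sqrt (qnum q (l+m+1) * qnum q (l-m+1)) / qnum q (2*l+2)\<bar>
           \<le> q powr (- 1) / qgap q"
    and "\<bar>q powr (m + 1) * sqrt (qnum q (l+m) * qnum q (l-m)) / qnum q (2*l)\<bar>
           \<le> q powr (- 1) / qgap q"
  using HB_bounds[OF assms]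
  by (intro abs_sqrt_qnum_term_le[of _ "l+m+1" _ "l-m+1"] abs_sqrt_qnum_term_le[of _ "l+m" _ "l-m"];
      auto simp: field_simps)+

lemma amat_bounded:
  assumes "\<bar>s\<bar> \<le> 1"
  shows "bounded_entries (2 * q powr (- 1) / qgap q) (amat q s)"
  unfolding bounded_entries_def
proof (intro allI)
  fix i j :: "real \<times> real"
  obtain l m where j: "j = (l, m)" by fastforce
  have g: "0 < qgap q" by (rule qgap_pos)
  define up where "up = q powr (m - l - 1/2) * sqrt (qnum q (l+m+1) * qnum q (l+m+2)) / qnum q (2*l+2)"
  define down where "down = q powr (m + l + 1/2) * sqrt (qnum q (l-m-1) * qnum q (l-m)) / qnum q (2*l)"
  define diag where "diag = s * ((1 + q\<^sup>2) * q powr (m - 1/2) / (qnum q (2*l) * qnum q (2*l+2)))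
           * sqrt (qnum q (l+m+1) * qnum q (l-m))"
  have entry: "amat q s i j = (if i \<in> HB \<and> j \<in> HB then
      if i = (l+1, m+1) then of_real up else if i = (l-1, m+1) then of_real (- down)
      else if i = (l, m+1) then of_real diag else 0 else 0)"
    unfolding amat_def j up_def down_def diag_def by simp
  define B where "B = q powr (- 1) / qgap q"
  have B: "0 \<le> B" using g unfolding B_def by simp
  have "cmod (amat q s i j) \<le> 2 * B"
  proof (cases "(l, m) \<in> HB")
    case True
    note lm = HB_bounds[OF True]
    have "\<bar>up\<bar> \<le> B" "\<bar>down\<bar> \<le> B"
      unfolding up_def down_def B_def using abs_amat_offdiag_le[OF True] by simp_all
    moreover have "\<bar>diag\<bar> \<le> 2 * B"
    proof -
      have "\<bar>diag\<bar> \<le> 2 * (q powr (2*l - 1) / qgap q)"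
        using abs_amat_diag_le[OF True assms] unfolding diag_def by simp
      also have "\<dots> \<le> 2 * B"
        unfolding B_def using g lm by (intro mult_left_mono divide_right_mono powr_antimono) auto
      finally show ?thesis .
    qed
    ultimately show ?thesis using B unfolding entry by auto
  next
    case False
    then show ?thesis using B j unfolding entry by auto
  qed
  then show "cmod (amat q s i j) \<le> 2 * q powr (- 1) / qgap q" by (simp add: B_def)
qed

lemma amat_diff_exp_decay:
  "exp_decay q (4 * q powr (- 1) / qgap q) (mat_sub (amat q 1) (amat q (-1)))"
  unfolding exp_decay_def
proof (intro allI)
  fix i j :: "real \<times> real"
  obtain l m where j: "j = (l, m)" by fastforce
  have g: "0 < qgap q" by (rule qgap_pos)
  show "cmod (mat_sub (amat q 1) (amat q (-1)) i j) \<le> 4 * q powr (- 1) / qgap q * q powr (fst i + fst j)"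
  proof (cases "i = (l, m+1) \<and> i \<in> HB \<and> j \<in> HB")
    case True
    have c: "i \<in> HB \<and> (l, m) \<in> HB" "i \<noteq> (l+1, m+1)" "i \<noteq> (l-1, m+1)" "i = (l, m+1)"
      using True j by auto
    have diag: "cmod (amat q s i j) \<le> 2 * q powr (2*l - 1) / qgap q" if "\<bar>s\<bar> \<le> 1" for s
      unfolding amat_def j prod.case if_P[OF c(1)] if_not_P[OF c(2)] if_not_P[OF c(3)] if_P[OF c(4)]
        norm_of_real
      using abs_amat_diag_le[OF _ that, of l m] c(1) by simp
    have "cmod (mat_sub (amat q 1) (amat q (-1)) i j) \<le> 4 * q powr (2*l - 1) / qgap q"
      unfolding mat_sub_def using norm_triangle_ineq4[of "amat q 1 i j" "amat q (-1) i j"]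
        diag[of 1] diag[of "-1"] by simp
    also have "q powr (2*l - 1) = q powr (- 1) * q powr (fst i + fst j)"
      unfolding powr_add[symmetric] using c(4) j by (intro arg_cong[where f = "(powr) q"]) simp
    finally show ?thesis by simp
  next
    case False
    then have "i \<noteq> (l, m+1) \<or> i \<notin> HB \<or> (l, m) \<notin> HB" using j by auto
    then have "amat q 1 i j = amat q (-1) i j"
      unfolding amat_def j by (elim disjE) simp_all
    then show ?thesis using g by (simp add: mat_sub_def)
  qed
qed

lemma bmat_bounded:
  assumes "\<bar>s\<bar> \<le> 1"
  shows "bounded_entries (q powr (- 1) / qgap q + 2 * q powr (- 1) / (qgap q)\<^sup>2) (bmat q s)"
  unfolding bounded_entries_def
proof (intro allI)
  fix i j :: "real \<times> real"
  obtain l m where j: "j = (l, m)" by fastforce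
  have g: "0 < qgap q" by (rule qgap_pos)
  define up where "up = q powr (m + 1) * sqrt (qnum q (l+m+1) * qnum q (l-m+1)) / qnum q (2*l+2)"
  define down where "down = q powr (m + 1) * sqrt (qnum q (l+m) * qnum q (l-m)) / qnum q (2*l)"
  define diag where "diag = s * (qnum q (l-m+1) * qnum q (l+m) - q\<^sup>2 * qnum q (l-m) * qnum q (l+m+1))
           / (qnum q (2*l) * qnum q (2*l+2))"
  have entry: "bmat q s i j = (if i \<in> HB \<and> j \<in> HB then
      if i = (l+1, m) then of_real (- up) else if i = (l-1, m) then of_real (- down)
      else if i = (l, m) then of_real diag else 0 else 0)"
    unfolding bmat_def j up_def down_def diag_def by simp
  define B where "B = q powr (- 1) / qgap q"
  define B' where "B' = 2 * (q powr (- 1) / (qgap q)\<^sup>2)"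
  have B: "0 \<le> B" "0 \<le> B'" using g unfolding B_def B'_def by simp_all
  have "cmod (bmat q s i j) \<le> B + B'"
  proof (cases "(l, m) \<in> HB")
    case True
    note lm = HB_bounds[OF True]
    have "\<bar>up\<bar> \<le> B" "\<bar>down\<bar> \<le> B"
      unfolding up_def down_def B_def using abs_bmat_offdiag_le[OF True] by simp_all
    moreover have "\<bar>diag\<bar> \<le> B'"
    proof -
      have "\<bar>diag\<bar> \<le> 2 * (q powr (2*l - 1) / (qgap q)\<^sup>2)"
        using abs_bmat_diag_le[OF True assms] unfolding diag_def by simp
      also have "\<dots> \<le> B'"
        unfolding B'_def using g lm
        by (intro mult_left_mono divide_right_mono powr_antimono) auto
      finally show ?thesis .
    qed
    ultimately show ?thesis using B unfolding entry by auto
  next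
    case False
    then show ?thesis using B j unfolding entry by auto
  qed
  then show "cmod (bmat q s i j) \<le> q powr (- 1) / qgap q + 2 * q powr (- 1) / (qgap q)\<^sup>2"
    by (simp add: B_def B'_def)
qed

lemma bmat_diff_exp_decay:
  "exp_decay q (4 * q powr (- 1) / (qgap q)\<^sup>2) (mat_sub (bmat q 1) (bmat q (-1)))"
  unfolding exp_decay_def
proof (intro allI)
  fix i j :: "real \<times> real"
  obtain l m where j: "j = (l, m)" by fastforce
  have g: "0 < qgap q" by (rule qgap_pos)
  show "cmod (mat_sub (bmat q 1) (bmat q (-1)) i j)
      \<le> 4 * q powr (- 1) / (qgap q)\<^sup>2 * q powr (fst i + fst j)"
  proof (cases "i = (l, m) \<and> i \<in> HB \<and> j \<in> HB")
    case True
    have c: "i \<in> HB \<and> (l, m) \<in> HB" "i \<noteq> (l+1, m)" "i \<noteq> (l-1, m)" "i = (l, m)"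
      using True j by auto
    have diag: "cmod (bmat q s i j) \<le> 2 * q powr (2*l - 1) / (qgap q)\<^sup>2" if "\<bar>s\<bar> \<le> 1" for s
      unfolding bmat_def j prod.case if_P[OF c(1)] if_not_P[OF c(2)] if_not_P[OF c(3)] if_P[OF c(4)]
        norm_of_real
      using abs_bmat_diag_le[OF _ that, of l m] c(1) by simp
    have "cmod (mat_sub (bmat q 1) (bmat q (-1)) i j) \<le> 4 * q powr (2*l - 1) / (qgap q)\<^sup>2"
      unfolding mat_sub_def using norm_triangle_ineq4[of "bmat q 1 i j" "bmat q (-1) i j"]
        diag[of 1] diag[of "-1"] by simp
    also have "q powr (2*l - 1) = q powr (- 1) * q powr (fst i + fst j)"
      unfolding powr_add[symmetric] using c(4) j by (intro arg_cong[where f = "(powr) q"]) simp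
    finally show ?thesis by simp
  next
    case False
    then have "i \<noteq> (l, m) \<or> (l, m) \<notin> HB" using j by auto
    then have "bmat q 1 i j = bmat q (-1) i j"
      unfolding bmat_def j by (elim disjE) simp_all
    then show ?thesis using g by (simp add: mat_sub_def)
  qed
qed

lemma exp_decay_nonneg:
  assumes "exp_decay q C M"
  shows "0 \<le> C"
proof -
  fix i
  have "cmod (M i i) \<le> C * q powr (fst i + fst i)"
    using assms unfolding exp_decay_def by blast
  then have "0 \<le> C * q powr (fst i + fst i)"
    using norm_ge_zero[of "M i i"] by linarith
  then show "0 \<le> C" using q_pos by (simp add: zero_le_mult_iff)
qed

lemma powr_shift_le:
  assumes "a - K \<le> b"
  shows "q powr (b + c) \<le> q powr (- K) * q powr (a + c)"
proof -
  have "q powr (b + c) \<le> q powr (- K + (a + c))"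
    using assms q_pos q_less_1 by (intro powr_mono') auto
  then show ?thesis by (simp only: powr_add)
qed

lemma exp_decay_mult_left:
  assumes "banded K M" "bounded_entries B M" "exp_decay q C D"
  shows "exp_decay q (real (card ({-K..K} \<times> {-K..K})) * B * C * q powr (- K)) (mat_mult M D)"
  unfolding exp_decay_def
proof (intro allI)
  fix i j
  have B: "0 \<le> B" and C: "0 \<le> C"
    using assms(2,3) bounded_entries_nonneg exp_decay_nonneg by auto
  have entry_le: "cmod (M i' j') \<le> B" "cmod (D i' j') \<le> C * q powr (fst i' + fst j')" for i' j'
    using assms(2,3) unfolding bounded_entries_def exp_decay_def by blast+
  have "cmod (M i k * D k j) \<le> B * C * q powr (- K) * q powr (fst i + fst j)"
    if "k \<in> nbhd K i" for k
  proof -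
    have "cmod (M i k * D k j) \<le> B * (C * q powr (fst k + fst j))"
      unfolding norm_mult using entry_le B by (intro mult_mono) auto
    also have "\<dots> \<le> B * (C * (q powr (- K) * q powr (fst i + fst j)))"
      using powr_shift_le[OF fst_nbhd_ge[OF that]] B C by (intro mult_left_mono) auto
    finally show ?thesis by (simp add: mult_ac)
  qed
  then have "cmod (mat_mult M D i j) \<le> real (card (nbhd K i)) * (B * C * q powr (- K) * q powr (fst i + fst j))"
    unfolding mat_mult_banded_left[OF assms(1)] by (intro order_trans[OF norm_sum] sum_bounded_above)
  also have "\<dots> \<le> real (card ({-K..K} \<times> {-K..K})) * (B * C * q powr (- K) * q powr (fst i + fst j))"
    using B C by (intro mult_right_mono of_nat_mono card_nbhd_le) auto
  finally show "cmod (mat_mult M D i j)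
      \<le> real (card ({-K..K} \<times> {-K..K})) * B * C * q powr (- K) * q powr (fst i + fst j)"
    by (simp add: mult_ac)
qed

lemma exp_decay_mult_right:
  assumes "banded K N" "bounded_entries B N" "exp_decay q C D"
  shows "exp_decay q (real (card ({-K..K} \<times> {-K..K})) * B * C * q powr (- K)) (mat_mult D N)"
  unfolding exp_decay_def
proof (intro allI)
  fix i j
  have B: "0 \<le> B" and C: "0 \<le> C"
    using assms(2,3) bounded_entries_nonneg exp_decay_nonneg by auto
  have entry_le: "cmod (N i' j') \<le> B" "cmod (D i' j') \<le> C * q powr (fst i' + fst j')" for i' j'
    using assms(2,3) unfolding bounded_entries_def exp_decay_def by blast+
  have "cmod (D i k * N k j) \<le> B * C * q powr (- K) * q powr (fst i + fst j)"
    if "k \<in> nbhd K j" for k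
  proof -
    have "cmod (D i k * N k j) \<le> (C * q powr (fst k + fst i)) * B"
      unfolding norm_mult using entry_le B C by (intro mult_mono) (auto simp: add.commute)
    also have "\<dots> \<le> (C * (q powr (- K) * q powr (fst j + fst i))) * B"
      using powr_shift_le[OF fst_nbhd_ge[OF that]] B C by (intro mult_right_mono mult_left_mono) auto
    finally show ?thesis by (simp add: mult_ac add.commute)
  qed
  then have "cmod (mat_mult D N i j) \<le> real (card (nbhd K j)) * (B * C * q powr (- K) * q powr (fst i + fst j))"
    unfolding mat_mult_banded_right[OF assms(1)] by (intro order_trans[OF norm_sum] sum_bounded_above)
  also have "\<dots> \<le> real (card ({-K..K} \<times> {-K..K})) * (B * C * q powr (- K) * q powr (fst i + fst j))"
    using B C by (intro mult_right_mono of_nat_mono card_nbhd_le) auto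
  finally show "cmod (mat_mult D N i j)
      \<le> real (card ({-K..K} \<times> {-K..K})) * B * C * q powr (- K) * q powr (fst i + fst j)"
    by (simp add: mult_ac)
qed

lemma exp_decay_mat_sub_mat_mult:
  assumes "banded K M" "banded K M'" "banded K N" "bounded_entries B M'" "bounded_entries B' N"
    and "exp_decay q C (mat_sub M M')" "exp_decay q C' (mat_sub N N')"
  shows "\<exists>C''. exp_decay q C'' (mat_sub (mat_mult M N) (mat_mult M' N'))"
  unfolding mat_sub_mat_mult[OF assms(1,2)]
  using exp_decay_add[OF exp_decay_mult_right[OF assms(3,5,6)] exp_decay_mult_left[OF assms(2,4,7)]]
  by blast

lemma pi_rep_bounded:
  assumes "\<bar>s\<bar> \<le> 1"
  shows "\<exists>B. bounded_entries B (pi_rep q s x)"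
proof (induction x)
  case (Times x y)
  obtain K where "banded K (pi_rep q s x)" using pi_rep_banded by blast
  with Times.IH show ?case by (auto dest: bounded_entries_mult)
qed (use amat_bounded bmat_bounded assms bounded_entries_adj bounded_entries_scale_id
         bounded_entries_add in fastforce)+

lemma pi_rep_diff_exp_decay: "\<exists>C. exp_decay q C (mat_sub (pi_rep q 1 x) (pi_rep q (-1) x))"
proof (induction x)
  case Ga
  show ?case using amat_diff_exp_decay by auto
next
  case Gastar
  have "mat_sub (mat_adj (amat q 1)) (mat_adj (amat q (-1))) = mat_adj (mat_sub (amat q 1) (amat q (-1)))"
    by (simp add: mat_sub_def mat_adj_def)
  then show ?case using exp_decay_adj[OF amat_diff_exp_decay] by auto
next
  case Gb
  show ?case using bmat_diff_exp_decay by auto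
next
  case (Scal c)
  show ?case using exp_decay_sub_self by auto
next
  case (Plus x y)
  have "mat_sub (mat_add A B) (mat_add A' B') = mat_add (mat_sub A A') (mat_sub B B')"
    for A B A' B' :: "(real \<times> real) mat"
    by (simp add: mat_sub_def mat_add_def fun_eq_iff)
  with Plus.IH show ?case by (auto dest: exp_decay_add)
next
  case (Times x y)
  obtain K1 K2 K3 where "banded K1 (pi_rep q 1 x)" "banded K2 (pi_rep q (-1) x)" "banded K3 (pi_rep q 1 y)"
    using pi_rep_banded by meson
  then have "banded (max K1 (max K2 K3)) (pi_rep q 1 x)" "banded (max K1 (max K2 K3)) (pi_rep q (-1) x)"
    "banded (max K1 (max K2 K3)) (pi_rep q 1 y)"
    by (auto elim: banded_mono)
  moreover obtain B where "bounded_entries B (pi_rep q (-1) x)"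
    using pi_rep_bounded[of "-1" x] by auto
  moreover obtain B' where "bounded_entries B' (pi_rep q 1 y)"
    using pi_rep_bounded[of 1 y] by auto
  ultimately show ?case
    using Times.IH unfolding pi_rep.simps by (blast intro: exp_decay_mat_sub_mat_mult)
qed

lemma poly_times_powr_bounded: "\<exists>G. \<forall>y\<ge>0. (y + 1) ^ p * q powr y \<le> G"
proof -
  define t where "t = - ln q / (p + 1)"
  define c where "c = min 1 t"
  have ln_q: "ln q < 0" using q_pos q_less_1 by simp
  then have t: "0 < t" and c: "0 < c" "c \<le> 1" "c \<le> t"
    by (auto simp: t_def c_def divide_neg_pos)
  have "(y + 1) ^ p * q powr y \<le> 1 / c ^ p" if y: "0 \<le> y" for y
  proof -
    have "c * y \<le> t * y" using c y by (intro mult_right_mono)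
    then have "c * (y + 1) \<le> 1 + t * y" using c by (simp add: distrib_left)
    also have "\<dots> \<le> exp (t * y)" by (rule exp_ge_add_one_self)
    finally have "(c * (y + 1)) ^ p \<le> exp (t * y) ^ p"
      using c y by (intro power_mono) auto
    also have "\<dots> = exp (p * t * y)" by (simp add: mult.assoc flip: exp_of_nat_mult)
    also have "\<dots> \<le> exp (- ln q * y)"
    proof -
      have "p * t \<le> - ln q" using ln_q unfolding t_def by (simp add: field_simps)
      then have "p * t * y \<le> - ln q * y" using y by (rule mult_right_mono)
      then show ?thesis by simp
    qed
    finally have "c ^ p * (y + 1) ^ p * q powr y \<le> exp (- ln q * y) * q powr y"
      by (simp add: power_mult_distrib mult_right_mono)
    also have "\<dots> = 1"
      using q_pos by (simp add: powr_def exp_minus_inverse mult.commute flip: exp_add)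
    finally show ?thesis using c by (simp add: field_simps)
  qed
  then show ?thesis by blast
qed

lemma rapid_decay_if_exp_decay:
  assumes "exp_decay q C M"
  shows "rapid_decay M"
  unfolding rapid_decay_def
proof
  fix p :: nat
  obtain G where G: "\<And>y. 0 \<le> y \<Longrightarrow> (y + 1) ^ p * q powr y \<le> G"
    using poly_times_powr_bounded by blast
  have C: "0 \<le> C" using exp_decay_nonneg[OF assms] .
  have "cmod (M (l, m) (l', m')) * (l + l' + 1) ^ p \<le> C * G"
    if "(l, m) \<in> HB" "(l', m') \<in> HB" for l m l' m'
  proof -
    have l: "0 \<le> l + l'" using HB_bounds[OF that(1)] HB_bounds[OF that(2)] by linarith
    have "cmod (M (l, m) (l', m')) * (l + l' + 1) ^ p \<le> C * q powr (l + l') * (l + l' + 1) ^ p"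
      using assms l unfolding exp_decay_def by (metis fst_conv mult_right_mono zero_le_power
          add_nonneg_nonneg zero_le_one)
    also have "\<dots> \<le> C * G"
      using G[OF l] C by (simp add: mult.assoc mult.commute mult_left_mono)
    finally show ?thesis .
  qed
  then show "bdd_above ((\<lambda>((l, m), l', m'). cmod (M (l, m) (l', m')) * (l + l' + 1) ^ p) ` (HB \<times> HB))"
    by (intro bdd_aboveI2[where M = "C * G"]) auto
qed

lemma summable_powr_fst_HB: "(\<lambda>i. q powr fst i) summable_on HB"
proof -
  define \<rho> where "\<rho> = q powr (1/4)"
  have \<rho>: "0 < \<rho>" "\<rho> < 1"
    using q_pos q_less_1 powr_less_mono'[of q 0 "1/4"] by (auto simp: \<rho>_def)
  have "(\<lambda>n::nat. \<rho> ^ n) summable_on UNIV"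
    using \<rho> by (subst summable_on_UNIV_nonneg_real_iff) (auto intro: summable_geometric)
  then have geometric2: "(\<lambda>(n, k). \<rho> ^ n * \<rho> ^ k) summable_on (UNIV :: (nat \<times> nat) set)"
    using summable_on_product_nonneg[of "\<lambda>n. \<rho> ^ n" UNIV "\<lambda>n. \<rho> ^ n" UNIV] \<rho> by simp
  define S where "S = {(n::nat, k::nat). k \<le> 2 * n + 1}"
  have "(\<lambda>(n, k). \<rho> ^ n * \<rho> ^ k) summable_on S"
    by (rule summable_on_subset_banach[OF geometric2]) simp
  then have "(\<lambda>(n, k). q powr (real n + 1/2)) summable_on S"
  proof (rule summable_on_comparison_test)
    fix z assume "z \<in> S"
    then obtain n k where z: "z = (n, k)" "k \<le> 2 * n + 1" unfolding S_def by blast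
    have "\<rho> ^ n * \<rho> ^ k = q powr ((real n + real k) / 4)"
      using q_pos by (simp add: \<rho>_def powr_powr add_divide_distrib powr_add flip: powr_realpow)
    moreover have "q powr (real n + 1/2) \<le> q powr ((real n + real k) / 4)"
    proof (rule powr_antimono)
      have "real k \<le> real (2 * n + 1)" using z(2) by (simp only: of_nat_le_iff)
      then show "(real n + real k) / 4 \<le> real n + 1/2" by simp
    qed
    ultimately show "(case z of (n, k) \<Rightarrow> q powr (real n + 1/2)) \<le> (case z of (n, k) \<Rightarrow> \<rho> ^ n * \<rho> ^ k)"
      using z(1) by simp
  qed auto
  moreover define h where "h = (\<lambda>(n::nat, k::nat). (real n + 1/2, real k - real n - 1/2))"
  have "inj_on h S" unfolding h_def inj_on_def by auto
  ultimately have "(\<lambda>i. q powr fst i) summable_on h ` S"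
    by (subst summable_on_reindex) (auto simp: h_def o_def case_prod_unfold)
  moreover have "HB \<subseteq> h ` S"
  proof
    fix i assume "i \<in> HB"
    then obtain n k where "fst i - 1/2 = real n" "fst i + snd i = real k" "snd i \<le> fst i"
      unfolding HB_def by (auto elim!: Nats_cases)
    then have "i = h (n, k)" "(n, k) \<in> S"
      unfolding h_def S_def by (auto simp: prod_eq_iff)
    then show "i \<in> h ` S" by blast
  qed
  ultimately show ?thesis by (rule summable_on_subset_banach)
qed

lemma trace_class_tensor_if_exp_decay:
  fixes G :: "'k::finite mat"
  assumes "supported HB M" "exp_decay q C M"
  shows "trace_class (HB \<times> UNIV) (mat_tensor M G)"
proof (rule trace_class_if_entries_le)
  define \<Gamma> where "\<Gamma> = Max (range (\<lambda>(s, t). cmod (G s t)))"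
  have G_le: "cmod (G s t) \<le> \<Gamma>" for s t
    unfolding \<Gamma>_def by (rule Max_ge) auto
  show "(\<lambda>x. q powr fst (fst x)) summable_on HB \<times> (UNIV :: 'k set)"
    using summable_on_product_nonneg[OF summable_powr_fst_HB, of "\<lambda>_. 1" "UNIV :: 'k set"]
    by (simp add: case_prod_unfold)
  show "supported (HB \<times> UNIV) (mat_tensor M G)"
    using assms(1) by (rule supported_tensor)
  show "(cmod (mat_tensor M G x y))\<^sup>2 \<le> (C * \<Gamma>)\<^sup>2 * (q powr fst (fst x))\<^sup>2 * q powr fst (fst y)"
    if "x \<in> HB \<times> UNIV" "y \<in> HB \<times> UNIV" for x y
  proof -
    obtain i s j t where xy: "x = (i, s)" "y = (j, t)" by fastforce
    have j: "0 \<le> fst j" using that xy HB_bounds[of "fst j" "snd j"] by auto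
    have M_le: "cmod (M i j) \<le> C * q powr (fst i + fst j)"
      using assms(2) unfolding exp_decay_def by blast
    have "cmod (mat_tensor M G x y) \<le> C * q powr (fst i + fst j) * \<Gamma>"
      unfolding xy mat_tensor_def prod.case norm_mult
      using M_le G_le exp_decay_nonneg[OF assms(2)] by (intro mult_mono) auto
    then have "(cmod (mat_tensor M G x y))\<^sup>2 \<le> (C * q powr (fst i + fst j) * \<Gamma>)\<^sup>2"
      by (rule power_mono) simp
    also have "\<dots> = (C * \<Gamma>)\<^sup>2 * (q powr fst i)\<^sup>2 * (q powr fst j)\<^sup>2"
      by (simp add: power_mult_distrib powr_add mult_ac)
    also have "\<dots> \<le> (C * \<Gamma>)\<^sup>2 * (q powr fst i)\<^sup>2 * q powr fst j"
      using j powr_antimono[of 0 "fst j"] q_pos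
      by (intro mult_left_mono) (auto simp: power2_eq_square mult_le_one)
    finally show ?thesis unfolding xy by simp
  qed
qed (use q_pos in simp)

end

theorem mainTheorem8:
  fixes q :: real
  assumes "0 < q" and "q < 1"
  shows "(\<forall>x. rapid_decay (rho_minus q x))
       \<and> (\<forall>x. commutator Fop (pi_tot q x) = mat_scale 2 (mat_tensor (rho_minus q x) (mat_mult F2 gamma2)))
       \<and> (\<forall>x. trace_class HB2 (commutator Fop (pi_tot q x)))
       \<and> finite_summable q"
proof -
  have supp: "supported HB (rho_minus q x)" "supported HB (rho_plus q x)" for x
    unfolding rho_minus_def rho_plus_def
    by (intro supported_scale supported_sub supported_add pi_rep_supported)+
  have decay: "\<exists>C. exp_decay q C (rho_minus q x)" for x
    using pi_rep_diff_exp_decay[OF assms] unfolding rho_minus_def by (blast intro: exp_decay_scale)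
  have comm: "commutator Fop (pi_tot q x) = mat_scale 2 (mat_tensor (rho_minus q x) (mat_mult F2 gamma2))" for x
    unfolding pi_tot_def using supp by (rule commutator_Fop_graded[rotated])
  note comm_tensor = comm[unfolded mat_scale_mat_tensor]
  have tc: "trace_class HB2 (commutator Fop (pi_tot q x))" for x
    using decay[of x] trace_class_tensor_if_exp_decay[OF assms supported_scale[OF supp(1)] exp_decay_scale]
    unfolding comm_tensor HB2_def by blast
  have "finite_summable q"
    unfolding finite_summable_def
  proof (intro exI[of _ 0] allI impI)
    fix xs :: "sq_expr list" assume "length xs = Suc 0"
    then obtain x where "xs = [x]" by (auto simp: length_Suc_conv)
    moreover have "supported HB2 (commutator Fop (pi_tot q x))"
      unfolding comm_tensor HB2_def by (intro supported_tensor supported_scale supp)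
    ultimately show "trace_class HB2 (foldr mat_mult (map (\<lambda>x. commutator Fop (pi_tot q x)) xs) (mat_id HB2))"
      using tc[of x] by (simp add: mat_mult_id_right)
  qed
  then show ?thesis
    using decay rapid_decay_if_exp_decay[OF assms] comm tc by blast
qed

end
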